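(* Let $V$ be a subspace of $\mathbb{R}^n$ and let $A\in\mathbb{R}^{m\times n}$ have i.i.d. $\mathcal{N}(0,1/m)$ entries. With probability $1$, $|\{\mathrm{diag}(\mathrm{sgn}(Av))A:v\in V\}|\leqslant10m^{2\dim V}$.
   Context: $\mathrm{sgn}$ acts entrywise with $\mathrm{sgn}(0)=0$; $\mathrm{diag}(u)$ is the diagonal matrix with diagonal $u$. *)

theory Defs
  imports "HOL-Probability.Probability"
begin

definition diag_mat :: "real^'m \<Rightarrow> real^'m^'m" where
  "diag_mat u = (\<chi> i j. if i = j then u $ i else 0)"

definition sgn_vec :: "real^'m \<Rightarrow> real^'m" where
  "sgn_vec u = (\<chi> i. sgn (u $ i))"

text \<open>Random m x n matrix with i.i.d. N(0,1/m) entries (standard deviation 1/sqrt m),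
  modelled as product measure over the entry index set.\<close>
definition gauss_entries :: "('m::finite \<times> 'n::finite \<Rightarrow> real) measure" where
  "gauss_entries = PiM UNIV (\<lambda>_. density lborel (normal_density 0 (1 / sqrt (real CARD('m)))))"

definition to_mat :: "('m::finite \<times> 'n::finite \<Rightarrow> real) \<Rightarrow> real^'n^'m" where
  "to_mat f = (\<chi> i j. f (i, j))"

end

theory Submission
  imports Defs
begin

(* The bound holds for every matrix A, not only almost surely. The matrix diag(sgn(Av)) A is
   determined by the sign vector sgn(Av), so it suffices to count the sign vectors realised on V
   by the m row functionals. Adding one functional r to a family splits a sign pattern of the
   others into several patterns only if that pattern is already realised on the hyperplane
   section V \<inter> ker r: if v1, v2 share the old pattern but r separates their signs, a positive
   combination of v1 and v2 lies in ker r and keeps the old pattern. Since the section has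
   smaller dimension, the number b(m, d) of patterns of m functionals on a space of dimension
   at most d satisfies b(m+1, d+1) \<le> b(m, d+1) + 2 b(m, d), whence b(m, d) \<le> 3 m^(2d). *)

lemma sgn_positive_combination:
  fixes p q \<alpha> \<beta> :: real
  assumes "sgn p = sgn q" "0 < \<alpha>" "0 < \<beta>"
  shows "sgn (\<alpha> * p + \<beta> * q) = sgn p"
proof -
  have "0 < p \<longleftrightarrow> 0 < q" "p < 0 \<longleftrightarrow> q < 0"
    using assms(1) by (metis sgn_greater, metis sgn_less)
  then show ?thesis
    using assms(2,3) by (cases p rule: linorder_cases) (auto simp: add_pos_pos add_neg_neg mult_pos_neg)
qed

lemma card_le_by_fibres:
  assumes "finite T" "f ` S \<subseteq> T" "U \<subseteq> T"
    and "\<And>t. t \<in> U \<Longrightarrow> card {s \<in> S. f s = t} \<le> k"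
    and "\<And>t. t \<in> T - U \<Longrightarrow> card {s \<in> S. f s = t} \<le> 1"
  shows "card S \<le> card (T - U) + k * card U"
proof -
  have "card S = card (\<Union>t\<in>T. {s \<in> S. f s = t})"
    using assms(2) by (intro arg_cong[where f = card]) blast
  also have "\<dots> \<le> (\<Sum>t\<in>T. card {s \<in> S. f s = t})"
    using assms(1) by (rule card_UN_le)
  also have "\<dots> = (\<Sum>t\<in>T - U. card {s \<in> S. f s = t}) + (\<Sum>t\<in>U. card {s \<in> S. f s = t})"
    using assms(3,1) by (rule sum.subset_diff)
  also have "\<dots> \<le> card (T - U) + k * card U"
  proof (rule add_mono)
    show "(\<Sum>t\<in>T - U. card {s \<in> S. f s = t}) \<le> card (T - U)"
      using sum_bounded_above[of "T - U" "\<lambda>t. card {s \<in> S. f s = t}" 1] assms(5) by simp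
    show "(\<Sum>t\<in>U. card {s \<in> S. f s = t}) \<le> k * card U"
      using sum_bounded_above[of U "\<lambda>t. card {s \<in> S. f s = t}" k] assms(4) by (simp add: mult.commute)
  qed
  finally show ?thesis .
qed

lemma subspace_hyperplane_section:
  fixes V :: "'a::real_inner set"
  assumes "subspace V"
  shows "subspace {v \<in> V. b \<bullet> v = 0}"
  using subspace_inter[OF assms subspace_hyperplane[of b]] by (simp add: Collect_conj_eq)

lemma dim_hyperplane_section_less:
  fixes V :: "'a::euclidean_space set"
  assumes "subspace V" "v \<in> V" "b \<bullet> v \<noteq> 0"
  shows "dim {w \<in> V. b \<bullet> w = 0} < dim V"
proof (rule ccontr)
  assume "\<not> ?thesis"
  then have "{w \<in> V. b \<bullet> w = 0} = V"
    using subspace_dim_equal[OF subspace_hyperplane_section[OF assms(1)] assms(1)] by auto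
  with assms(2,3) show False by blast
qed

fun sign_pattern_bound :: "nat \<Rightarrow> nat \<Rightarrow> nat" where
  "sign_pattern_bound 0 d = 1"
| "sign_pattern_bound (Suc m) 0 = 1"
| "sign_pattern_bound (Suc m) (Suc d) = sign_pattern_bound m (Suc d) + 2 * sign_pattern_bound m d"

lemma sign_pattern_bound_0_right [simp]: "sign_pattern_bound m 0 = 1"
  by (cases m) auto

lemma sign_pattern_bound_le_Suc: "sign_pattern_bound m d \<le> sign_pattern_bound (Suc m) d"
  by (cases d) auto

lemma sign_pattern_bound_le_power:
  assumes "0 < m"
  shows "sign_pattern_bound m d \<le> 3 * m ^ (2 * d)"
  using assms
proof (induction m arbitrary: d rule: nat_induct_non_zero)
  case 1
  then show ?case by (cases d) auto
next
  case (Suc m)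
  have power_2_Suc: "x ^ (2 * Suc e) = x\<^sup>2 * x ^ (2 * e)" for x e :: nat
    by (simp add: power_add[symmetric])
  show ?case
  proof (cases d)
    case (Suc e)
    have "sign_pattern_bound (Suc m) d = sign_pattern_bound m (Suc e) + 2 * sign_pattern_bound m e"
      using \<open>d = Suc e\<close> by simp
    also have "\<dots> \<le> 3 * (m\<^sup>2 * m ^ (2 * e)) + 2 * (3 * m ^ (2 * e))"
      using Suc.IH[of "Suc e"] Suc.IH[of e] by (simp only: power_2_Suc)
    also have "\<dots> = 3 * ((m\<^sup>2 + 2) * m ^ (2 * e))"
      by (simp add: algebra_simps)
    also have "\<dots> \<le> 3 * ((Suc m)\<^sup>2 * Suc m ^ (2 * e))"
      using \<open>0 < m\<close> by (intro mult_le_mono2 mult_le_mono power_mono) (simp_all add: power2_eq_square)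
    also have "\<dots> = 3 * Suc m ^ (2 * d)"
      using \<open>d = Suc e\<close> by (simp only: power_2_Suc)
    finally show ?thesis .
  qed simp
qed

definition sign_patterns :: "'i set \<Rightarrow> ('i \<Rightarrow> 'a::real_inner) \<Rightarrow> 'a set \<Rightarrow> ('i \<Rightarrow> real) set" where
  "sign_patterns I r V = (\<lambda>v. \<lambda>i\<in>I. sgn (r i \<bullet> v)) ` V"

lemma sign_patterns_subset_PiE: "sign_patterns I r V \<subseteq> (\<Pi>\<^sub>E i\<in>I. {-1, 0, 1})"
  unfolding sign_patterns_def by (auto simp: sgn_real_def split: if_splits)

lemma finite_sign_patterns: "finite I \<Longrightarrow> finite (sign_patterns I r V)"
  by (rule finite_subset[OF sign_patterns_subset_PiE]) (simp add: finite_PiE)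

lemma sign_pattern_on_hyperplane_section:
  fixes v1 v2 :: "'a::real_inner"
  assumes "subspace V" "v1 \<in> V" "v2 \<in> V"
    and same_signs: "\<forall>i\<in>I. sgn (r i \<bullet> v1) = sgn (r i \<bullet> v2)"
    and "sgn (b \<bullet> v1) \<noteq> sgn (b \<bullet> v2)"
  obtains w where "w \<in> V" "b \<bullet> w = 0" "\<forall>i\<in>I. sgn (r i \<bullet> w) = sgn (r i \<bullet> v1)"
proof -
  consider "b \<bullet> v1 = 0" | "b \<bullet> v2 = 0" | "(b \<bullet> v1) * (b \<bullet> v2) < 0"
    using \<open>sgn (b \<bullet> v1) \<noteq> sgn (b \<bullet> v2)\<close>
    by (cases "b \<bullet> v1" "0::real" rule: linorder_cases; cases "b \<bullet> v2" "0::real" rule: linorder_cases)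
       (auto simp: mult_pos_neg mult_neg_pos)
  then show ?thesis
  proof cases
    case 3
    define w where "w = \<bar>b \<bullet> v2\<bar> *\<^sub>R v1 + \<bar>b \<bullet> v1\<bar> *\<^sub>R v2"
    have "w \<in> V"
      using assms(1-3) by (simp add: w_def subspace_add subspace_scale)
    moreover have "b \<bullet> w = 0"
      using 3 by (auto simp: w_def inner_add_right abs_if mult_less_0_iff)
    moreover have "sgn (r i \<bullet> w) = sgn (r i \<bullet> v1)" if "i \<in> I" for i
    proof -
      have "0 < \<bar>b \<bullet> v2\<bar>" "0 < \<bar>b \<bullet> v1\<bar>"
        using 3 by auto
      then show ?thesis
        using sgn_positive_combination same_signs that by (simp add: w_def inner_add_right)
    qed
    ultimately show ?thesis using that by blast
  qed (use that assms(2,3) same_signs in auto)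
qed

lemma sign_pattern_extension_unique:
  assumes "subspace V" "v1 \<in> V" "v2 \<in> V"
    and same_pattern: "(\<lambda>i\<in>I. sgn (r i \<bullet> v1)) = (\<lambda>i\<in>I. sgn (r i \<bullet> v2))"
    and not_on_section: "(\<lambda>i\<in>I. sgn (r i \<bullet> v1)) \<notin> sign_patterns I r {v \<in> V. r a \<bullet> v = 0}"
  shows "(\<lambda>i\<in>insert a I. sgn (r i \<bullet> v1)) = (\<lambda>i\<in>insert a I. sgn (r i \<bullet> v2))"
proof -
  have same_signs: "\<forall>i\<in>I. sgn (r i \<bullet> v1) = sgn (r i \<bullet> v2)"
    using same_pattern by (metis restrict_apply')
  have "sgn (r a \<bullet> v1) = sgn (r a \<bullet> v2)"
  proof (rule ccontr)
    assume "sgn (r a \<bullet> v1) \<noteq> sgn (r a \<bullet> v2)"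
    then obtain w where "w \<in> V" "r a \<bullet> w = 0" "\<forall>i\<in>I. sgn (r i \<bullet> w) = sgn (r i \<bullet> v1)"
      using sign_pattern_on_hyperplane_section[OF assms(1-3) same_signs] by blast
    then have "(\<lambda>i\<in>I. sgn (r i \<bullet> v1)) \<in> sign_patterns I r {v \<in> V. r a \<bullet> v = 0}"
      unfolding sign_patterns_def by (intro image_eqI[where x = w] restrict_ext) auto
    with not_on_section show False by contradiction
  qed
  then show ?thesis
    using same_signs by (intro restrict_ext) auto
qed

lemma sign_pattern_fibre_eq:
  "{s \<in> sign_patterns (insert a I) r V. restrict s I = t}
     = (\<lambda>v. \<lambda>i\<in>insert a I. sgn (r i \<bullet> v)) ` {v \<in> V. (\<lambda>i\<in>I. sgn (r i \<bullet> v)) = t}"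
proof -
  have "insert a I \<inter> I = I"
    by blast
  then show ?thesis
    by (auto simp: sign_patterns_def)
qed

lemma card_sign_pattern_fibre_le_3:
  assumes "a \<notin> I"
  shows "card {s \<in> sign_patterns (insert a I) r V. restrict s I = t} \<le> 3"
proof -
  have "{s \<in> sign_patterns (insert a I) r V. restrict s I = t} \<subseteq> (\<lambda>c. t(a := c)) ` {-1, 0, 1}"
    unfolding sign_pattern_fibre_eq
  proof (rule image_subsetI)
    fix v assume "v \<in> {v \<in> V. (\<lambda>i\<in>I. sgn (r i \<bullet> v)) = t}"
    then have "(\<lambda>i\<in>insert a I. sgn (r i \<bullet> v)) = t(a := sgn (r a \<bullet> v))"
      using assms by auto
    then show "(\<lambda>i\<in>insert a I. sgn (r i \<bullet> v)) \<in> (\<lambda>c. t(a := c)) ` {-1, 0, 1}"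
      by (rule rev_image_eqI[of "sgn (r a \<bullet> v)", rotated]) (simp add: sgn_real_def)
  qed
  then have "card {s \<in> sign_patterns (insert a I) r V. restrict s I = t} \<le> card {-1, 0, 1 :: real}"
    by (meson card_image_le card_mono finite.insertI finite.emptyI finite_imageI order_trans)
  then show ?thesis
    by simp
qed

lemma card_sign_pattern_fibre_le_1:
  assumes "subspace V" "finite I" "t \<notin> sign_patterns I r {v \<in> V. r a \<bullet> v = 0}"
  shows "card {s \<in> sign_patterns (insert a I) r V. restrict s I = t} \<le> 1"
proof -
  have "finite {s \<in> sign_patterns (insert a I) r V. restrict s I = t}"
    using assms(2) by (simp add: finite_sign_patterns)
  moreover have "s1 = s2"
    if "s1 \<in> {s \<in> sign_patterns (insert a I) r V. restrict s I = t}"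
      and "s2 \<in> {s \<in> sign_patterns (insert a I) r V. restrict s I = t}" for s1 s2
  proof -
    obtain v1 v2 where "v1 \<in> V" "v2 \<in> V"
      and "s1 = (\<lambda>i\<in>insert a I. sgn (r i \<bullet> v1))" "s2 = (\<lambda>i\<in>insert a I. sgn (r i \<bullet> v2))"
      and "(\<lambda>i\<in>I. sgn (r i \<bullet> v1)) = t" "(\<lambda>i\<in>I. sgn (r i \<bullet> v2)) = t"
      using \<open>s1 \<in> _\<close> \<open>s2 \<in> _\<close> unfolding sign_pattern_fibre_eq by blast
    then show ?thesis
      using sign_pattern_extension_unique[OF assms(1), of v1 v2 r I a] assms(3) by simp
  qed
  ultimately show ?thesis
    unfolding One_nat_def by (subst card_le_Suc0_iff_eq) blast+
qed

lemma card_sign_patterns_insert_le: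
  fixes r :: "'i \<Rightarrow> 'a::real_inner"
  assumes "subspace V" "finite I" "a \<notin> I"
  shows "card (sign_patterns (insert a I) r V)
           \<le> card (sign_patterns I r V) + 2 * card (sign_patterns I r {v \<in> V. r a \<bullet> v = 0})"
    (is "card ?S \<le> card ?T + 2 * card ?U")
proof -
  have "finite ?T"
    using assms(2) by (rule finite_sign_patterns)
  have "?U \<subseteq> ?T"
    by (auto simp: sign_patterns_def)
  have "(\<lambda>s. restrict s I) ` ?S \<subseteq> ?T"
    by (auto simp: sign_patterns_def Int_absorb1 subset_insertI)
  then have "card ?S \<le> card (?T - ?U) + 3 * card ?U"
    using \<open>finite ?T\<close> \<open>?U \<subseteq> ?T\<close> card_sign_pattern_fibre_le_3[OF assms(3)]
      card_sign_pattern_fibre_le_1[OF assms(1,2)]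
    by (intro card_le_by_fibres) auto
  also have "\<dots> = card ?T + 2 * card ?U"
    using \<open>finite ?T\<close> \<open>?U \<subseteq> ?T\<close> card_mono[OF \<open>finite ?T\<close> \<open>?U \<subseteq> ?T\<close>]
    by (simp add: card_Diff_subset finite_subset)
  finally show ?thesis .
qed

lemma sign_patterns_insert_vanishing:
  assumes "a \<notin> I" "\<forall>v\<in>V. r a \<bullet> v = 0"
  shows "sign_patterns (insert a I) r V = (\<lambda>t. t(a := 0)) ` sign_patterns I r V"
  unfolding sign_patterns_def image_image using assms by (intro image_cong restrict_ext) auto

lemma card_sign_patterns_le:
  fixes r :: "'i \<Rightarrow> 'a::euclidean_space"
  assumes "finite I" "subspace V" "dim V \<le> d"
  shows "card (sign_patterns I r V) \<le> sign_pattern_bound (card I) d"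
  using assms
proof (induction I arbitrary: V d rule: finite_induct)
  case empty
  have "sign_patterns {} r V \<subseteq> {\<lambda>_. undefined}"
    by (auto simp: sign_patterns_def)
  then show ?case
    using card_mono[of "{\<lambda>_. undefined}"] by simp
next
  case (insert a I)
  show ?case
  proof (cases "\<forall>v\<in>V. r a \<bullet> v = 0")
    case True
    then have "card (sign_patterns (insert a I) r V) \<le> card (sign_patterns I r V)"
      using insert.hyps by (simp add: sign_patterns_insert_vanishing card_image_le finite_sign_patterns)
    also have "\<dots> \<le> sign_pattern_bound (card I) d"
      by (rule insert.IH[OF insert.prems])
    also have "\<dots> \<le> sign_pattern_bound (card (insert a I)) d"
      using insert.hyps by (simp add: sign_pattern_bound_le_Suc)
    finally show ?thesis .
  next
    case False
    then obtain v where "v \<in> V" "r a \<bullet> v \<noteq> 0"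
      by blast
    let ?W = "{w \<in> V. r a \<bullet> w = 0}"
    have "dim ?W < dim V"
      using dim_hyperplane_section_less[OF insert.prems(1)] \<open>v \<in> V\<close> \<open>r a \<bullet> v \<noteq> 0\<close> .
    then obtain e where "d = Suc e" "dim ?W \<le> e"
      using insert.prems(2) by (cases d) auto
    have "card (sign_patterns (insert a I) r V)
          \<le> card (sign_patterns I r V) + 2 * card (sign_patterns I r ?W)"
      using insert.prems(1) insert.hyps by (rule card_sign_patterns_insert_le)
    also have "\<dots> \<le> sign_pattern_bound (card I) d + 2 * sign_pattern_bound (card I) e"
      using insert.IH[OF insert.prems]
        insert.IH[OF subspace_hyperplane_section[OF insert.prems(1)] \<open>dim ?W \<le> e\<close>] by simp
    also have "\<dots> = sign_pattern_bound (card (insert a I)) d"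
      using insert.hyps \<open>d = Suc e\<close> by simp
    finally show ?thesis .
  qed
qed

lemma sign_masked_matrices_eq_image:
  fixes A :: "real^'n^'m"
  shows "{diag_mat (sgn_vec (A *v v)) ** A | v. v \<in> V}
           = (\<lambda>s. diag_mat (\<chi> i. s i) ** A) ` sign_patterns UNIV (\<lambda>i. A $ i) V"
  unfolding sign_patterns_def image_image Setcompr_eq_image
  by (intro image_cong) (simp_all add: sgn_vec_def matrix_mult_dot restrict_UNIV)

lemma card_sign_masked_matrices_le:
  fixes A :: "real^'n^'m::finite"
  assumes "subspace V"
  shows "finite {diag_mat (sgn_vec (A *v v)) ** A | v. v \<in> V} \<and>
         card {diag_mat (sgn_vec (A *v v)) ** A | v. v \<in> V} \<le> 3 * CARD('m) ^ (2 * dim V)"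
proof -
  let ?P = "sign_patterns (UNIV :: 'm set) (\<lambda>i. A $ i) V"
  have "finite ?P"
    by (simp add: finite_sign_patterns)
  have "card ?P \<le> sign_pattern_bound CARD('m) (dim V)"
    by (rule card_sign_patterns_le) (simp_all add: assms)
  also have "\<dots> \<le> 3 * CARD('m) ^ (2 * dim V)"
    by (simp add: sign_pattern_bound_le_power)
  finally show ?thesis
    unfolding sign_masked_matrices_eq_image using \<open>finite ?P\<close> card_image_le order_trans by blast
qed

theorem lemma25:
  fixes V :: "(real^'n::finite) set"
  assumes "subspace V"
  shows "AE f in (gauss_entries :: ('m::finite \<times> 'n \<Rightarrow> real) measure).
           finite {diag_mat (sgn_vec (to_mat f *v v)) ** to_mat f | v. v \<in> V} \<and>
           card {diag_mat (sgn_vec (to_mat f *v v)) ** to_mat f | v. v \<in> V}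
             \<le> 10 * CARD('m) ^ (2 * dim V)"
proof (rule AE_I2)
  fix f :: "'m \<times> 'n \<Rightarrow> real"
  show "finite {diag_mat (sgn_vec (to_mat f *v v)) ** to_mat f | v. v \<in> V} \<and>
        card {diag_mat (sgn_vec (to_mat f *v v)) ** to_mat f | v. v \<in> V} \<le> 10 * CARD('m) ^ (2 * dim V)"
    using card_sign_masked_matrices_le[OF assms, of "to_mat f"] by linarith
qed

end
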